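(* There is an absolute constant $K$ such that the following holds. Let $0\le\xi\le1/2$ and let $\rho\in\mathbb{R}^{n\times n}$ be psd with $\operatorname{tr}(\rho)=1$, $\rho_{ii}>0$ for all $i$, and $\sum_i|\rho_{ii}-1/n|\le\xi^3$. Let $\sigma\in\mathbb{R}^{n\times n}$ have entries $\sigma_{ij}=\frac{\rho_{ij}}{n\sqrt{\rho_{ii}\rho_{jj}}}$. Then $\|\rho-\sigma\|_{\mathrm{tr}}\le K\xi$.
   Context: $\|A\|_{\mathrm{tr}}$ is the trace norm. The paper writes the conclusion as $\|\rho-\sigma\|_{\mathrm{tr}}=\mathcal{O}(\xi)$, with the implied constant independent of $n$ and $\rho$. *)

theory Defs
  imports "Jordan_Normal_Form.Char_Poly"
begin

definition mat_trace :: "real mat \<Rightarrow> real" where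
  "mat_trace A = (\<Sum>i<dim_row A. A $$ (i, i))"

definition psd_mat :: "nat \<Rightarrow> real mat \<Rightarrow> bool" where
  "psd_mat n A \<longleftrightarrow> A \<in> carrier_mat n n \<and> transpose_mat A = A \<and>
     (\<forall>x \<in> carrier_vec n. 0 \<le> x \<bullet> (A *\<^sub>v x))"

text \<open>Trace norm = sum of singular values, i.e. of the square roots of the eigenvalues
  (with multiplicity) of A^T A.\<close>
definition trace_norm :: "real mat \<Rightarrow> real" where
  "trace_norm A = sum_mset (image_mset sqrt (proots (char_poly (transpose_mat A * A))))"

end

theory Submission
  imports Defs
begin

text \<open>Write \<open>d\<^sub>k = \<rho>\<^sub>k\<^sub>k\<close>, \<open>c\<^sub>k = 1 / sqrt (n d\<^sub>k)\<close> and \<open>e\<^sub>k = 1 - c\<^sub>k\<close>. Then \<open>\<sigma> = C \<rho> C\<close> for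
  \<open>C = diag c\<close>, and since \<open>1 - c\<^sub>k c\<^sub>l = e\<^sub>k + c\<^sub>k e\<^sub>l\<close> we get \<open>\<rho> - \<sigma> = E \<rho> + C \<rho> E\<close> with \<open>E = diag e\<close>.
  The trace norm of the symmetric matrix \<open>\<rho> - \<sigma>\<close> is \<open>\<Sum>\<^sub>i |q\<^sub>i\<^sup>T (\<rho> - \<sigma>) q\<^sub>i|\<close> for an
  orthonormal eigenbasis \<open>q\<^sub>i\<close>. As \<open>\<rho>\<close> is positive semidefinite,
  \<open>|x\<^sup>T \<rho> y| \<le> (t x\<^sup>T \<rho> x + y\<^sup>T \<rho> y / t) / 2\<close>, and summing \<open>(X q\<^sub>i)\<^sup>T \<rho> (X q\<^sub>i)\<close> over the basis
  gives \<open>tr (X \<rho> X)\<close> for diagonal \<open>X\<close>. Hence for every \<open>t > 0\<close>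
  \<open>\<parallel>\<rho> - \<sigma>\<parallel>\<^sub>t\<^sub>r \<le> t tr (E \<rho> E) + (tr \<rho> + tr (C \<rho> C)) / (2 t) = t X + 1 / t\<close>,
  where \<open>X = \<Sum>\<^sub>k (sqrt d\<^sub>k - sqrt (1/n))\<^sup>2 \<le> \<Sum>\<^sub>k |d\<^sub>k - 1/n| \<le> \<xi>\<^sup>3\<close>.
  Optimising over \<open>t\<close> gives \<open>\<parallel>\<rho> - \<sigma>\<parallel>\<^sub>t\<^sub>r \<le> 2 sqrt X \<le> 2 \<xi>\<close>.

  The orthonormal eigenbasis comes from the spectral theorem for real symmetric matrices,
  proved by deflation with Householder reflections; the eigenvalues are real by the usual
  Hermitian argument.\<close>

section \<open>Orthogonal diagonalization of real symmetric matrices\<close>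

definition orthogonal_matrix :: "nat \<Rightarrow> 'a::field mat \<Rightarrow> bool" where
  "orthogonal_matrix n P \<longleftrightarrow> P \<in> carrier_mat n n \<and> P\<^sup>T * P = 1\<^sub>m n"

lemma orthogonal_matrix_right_inverse:
  assumes "orthogonal_matrix n P"
  shows "P * P\<^sup>T = 1\<^sub>m n"
  using assms mat_mult_left_right_inverse[of "P\<^sup>T" n P]
  by (simp add: orthogonal_matrix_def)

lemma orthogonal_matrix_mult:
  assumes P: "orthogonal_matrix n P" and Q: "orthogonal_matrix n Q"
  shows "orthogonal_matrix n (P * Q)"
proof -
  have P': "P \<in> carrier_mat n n" "P\<^sup>T * P = 1\<^sub>m n" and Q': "Q \<in> carrier_mat n n" "Q\<^sup>T * Q = 1\<^sub>m n"
    using P Q by (auto simp: orthogonal_matrix_def)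
  have "(P * Q)\<^sup>T * (P * Q) = Q\<^sup>T * (P\<^sup>T * (P * Q))"
    using P' Q' by (simp add: transpose_mult[of P n n Q n] assoc_mult_mat[of "Q\<^sup>T" n n "P\<^sup>T" n "P * Q" n])
  also have "P\<^sup>T * (P * Q) = (P\<^sup>T * P) * Q"
    using P'(1) Q'(1) by simp
  also have "\<dots> = Q" unfolding P'(2) using Q' by simp
  finally show ?thesis using P' Q' by (simp add: orthogonal_matrix_def)
qed

lemma transpose_conj_symmetric:
  fixes A P :: "'a::comm_ring_1 mat"
  assumes A: "A \<in> carrier_mat n n" "A\<^sup>T = A" and P: "P \<in> carrier_mat n m"
  shows "(P\<^sup>T * A * P)\<^sup>T = P\<^sup>T * A * P"
  using A P by (simp add: transpose_mult[of _ m n _ m] transpose_mult[of _ n n _ m]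
      assoc_mult_mat[of _ m n _ n _ m])

lemma index_transpose_conj:
  fixes A P :: "'a::comm_ring_1 mat"
  assumes A: "A \<in> carrier_mat n n" and P: "P \<in> carrier_mat n m" and ij: "i < m" "j < m"
  shows "(P\<^sup>T * A * P) $$ (i, j) = col P i \<bullet> (A *\<^sub>v col P j)"
  using A P ij by (simp add: assoc_mult_mat[of _ m n _ n _ m] mult_mat_vec_def)

lemma eigenvalue_real_symmetric_real:
  fixes A :: "real mat"
  assumes A: "A \<in> carrier_mat n n" and sym: "A\<^sup>T = A"
    and ev: "eigenvector (map_mat complex_of_real A) v l"
  shows "l \<in> \<real>"
proof -
  have v: "v \<in> carrier_vec n" "v \<noteq> 0\<^sub>v n" and Av: "map_mat complex_of_real A *\<^sub>v v = l \<cdot>\<^sub>v v"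
    using ev A by (auto simp: eigenvector_def)
  have row: "(\<Sum>j<n. of_real (A $$ (i, j)) * v $ j) = l * v $ i" if "i < n" for i
    using arg_cong[OF Av, of "\<lambda>w. w $ i"] that A v(1)
    by (simp add: scalar_prod_def lessThan_atLeast0)
  define N where "N = (\<Sum>i<n. v $ i * cnj (v $ i))"
  define S where "S = (\<Sum>i<n. \<Sum>j<n. of_real (A $$ (i, j)) * v $ j * cnj (v $ i))"
  have "S = (\<Sum>i<n. (\<Sum>j<n. of_real (A $$ (i, j)) * v $ j) * cnj (v $ i))"
    unfolding S_def by (simp add: sum_distrib_right)
  also have "\<dots> = l * N"
    unfolding N_def sum_distrib_left by (intro sum.cong refl) (simp add: row mult.assoc)
  finally have SN: "S = l * N" .
  have Aij: "A $$ (i, j) = A $$ (j, i)" if "i < n" "j < n" for i j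
    using sym A that by (metis carrier_matD index_transpose_mat(1))
  have "cnj S = (\<Sum>i<n. \<Sum>j<n. of_real (A $$ (i, j)) * cnj (v $ j) * v $ i)"
    unfolding S_def by simp
  also have "\<dots> = (\<Sum>j<n. \<Sum>i<n. of_real (A $$ (i, j)) * cnj (v $ j) * v $ i)"
    by (rule sum.swap)
  also have "\<dots> = S"
    unfolding S_def by (intro sum.cong refl) (simp add: Aij mult.commute mult.left_commute)
  finally have "cnj S = S" .
  have N: "N = of_real (\<Sum>i<n. (cmod (v $ i))\<^sup>2)"
    unfolding N_def of_real_sum by (intro sum.cong refl) (metis complex_norm_square)
  obtain i where "i < n" "v $ i \<noteq> 0"
    using v by (metis eq_vecI carrier_vecD index_zero_vec)
  then have "0 < (\<Sum>i<n. (cmod (v $ i))\<^sup>2)"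
    by (intro sum_pos2[of _ i]) auto
  then have "N \<noteq> 0"
    unfolding N by (metis less_irrefl of_real_eq_0_iff)
  have "cnj N = N"
    unfolding N by (rule complex_cnj_complex_of_real)
  have "cnj l * N = l * N"
    using SN \<open>cnj S = S\<close> \<open>cnj N = N\<close> by (metis complex_cnj_mult)
  with \<open>N \<noteq> 0\<close> have "cnj l = l" by simp
  then show ?thesis by (simp add: Reals_cnj_iff)
qed

lemma real_symmetric_has_unit_eigenvector:
  fixes A :: "real mat"
  assumes A: "A \<in> carrier_mat n n" and sym: "A\<^sup>T = A" and n: "0 < n"
  shows "\<exists>e v. v \<in> carrier_vec n \<and> v \<bullet> v = 1 \<and> A *\<^sub>v v = e \<cdot>\<^sub>v v"
proof -
  let ?Ac = "map_mat complex_of_real A"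
  have Ac: "?Ac \<in> carrier_mat n n" using A by simp
  obtain as where cp: "char_poly ?Ac = (\<Prod>a\<leftarrow>as. [:- a, 1:])" and "length as = n"
    using char_poly_factorized[OF Ac] by auto
  with n obtain l where "l \<in> set as" by (cases as) auto
  then have root: "poly (char_poly ?Ac) l = 0"
    unfolding cp by (auto simp: poly_prod_list prod_list_zero_iff)
  then obtain v where "eigenvector ?Ac v l"
    using eigenvalue_root_char_poly[OF Ac] by (auto simp: eigenvalue_def)
  then obtain e where l: "l = of_real e"
    using eigenvalue_real_symmetric_real[OF A sym] by (metis Reals_cases)
  have "of_real (poly (char_poly A) e) = poly (char_poly ?Ac) l"
    unfolding l of_real_hom.char_poly_hom[OF A] by (simp add: of_real_hom.poly_map_poly)
  then have "eigenvalue A e"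
    using root eigenvalue_root_char_poly[OF A] by simp
  then obtain v where v: "v \<in> carrier_vec n" "v \<noteq> 0\<^sub>v n" and Av: "A *\<^sub>v v = e \<cdot>\<^sub>v v"
    using A by (auto simp: eigenvalue_def eigenvector_def)
  define w where "w = (1 / sqrt (v \<bullet> v)) \<cdot>\<^sub>v v"
  have "0 < v \<bullet> v"
    using conjugate_square_greater_0_vec[OF v(1)] v(2) by simp
  then have "w \<bullet> w = 1"
    using v(1) by (simp add: w_def)
  moreover have "w \<in> carrier_vec n" "A *\<^sub>v w = e \<cdot>\<^sub>v w"
    using v Av mult_mat_vec[OF A v(1)] by (auto simp: w_def smult_smult_assoc mult.commute)
  ultimately show ?thesis by blast
qed

lemma minus_zero_smult_vec [simp]:
  fixes x u :: "'a::ring vec"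
  assumes "dim_vec u = dim_vec x"
  shows "x - 0 \<cdot>\<^sub>v u = x"
  using assms by (intro eq_vecI) auto

text \<open>For \<open>u = 0\<close> the factor \<open>2 / 0\<close> is \<open>0\<close>, so the reflection degenerates to the identity.\<close>
definition householder :: "nat \<Rightarrow> real vec \<Rightarrow> real mat" where
  "householder n u = 1\<^sub>m n - (2 / (u \<bullet> u)) \<cdot>\<^sub>m mat n n (\<lambda>(i, j). u $ i * u $ j)"

lemma householder_carrier [simp]: "householder n u \<in> carrier_mat n n"
  unfolding householder_def carrier_mat_def by simp

lemma transpose_householder: "(householder n u)\<^sup>T = householder n u"
  unfolding householder_def by (rule eq_matI) auto

lemma householder_mult_vec:
  assumes u: "u \<in> carrier_vec n" and x: "x \<in> carrier_vec n"
  shows "householder n u *\<^sub>v x = x - (2 * (u \<bullet> x) / (u \<bullet> u)) \<cdot>\<^sub>v u"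
proof (rule eq_vecI)
  fix i assume "i < dim_vec (x - (2 * (u \<bullet> x) / (u \<bullet> u)) \<cdot>\<^sub>v u)"
  with u have i: "i < n" by simp
  have "(householder n u *\<^sub>v x) $ i
      = (\<Sum>j<n. ((if i = j then 1 else 0) - 2 / (u \<bullet> u) * (u $ i * u $ j)) * x $ j)"
    using i u x by (simp add: householder_def scalar_prod_def lessThan_atLeast0)
  also have "\<dots> = (\<Sum>j<n. (if i = j then x $ j else 0) - (2 / (u \<bullet> u) * u $ i) * (u $ j * x $ j))"
    by (intro sum.cong refl) (auto simp: algebra_simps)
  also have "\<dots> = (\<Sum>j<n. if i = j then x $ j else 0) - (2 / (u \<bullet> u) * u $ i) * (\<Sum>j<n. u $ j * x $ j)"
    by (simp add: sum_subtractf sum_distrib_left)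
  also have "\<dots> = x $ i - (2 / (u \<bullet> u) * u $ i) * (u \<bullet> x)"
    using i x by (simp add: scalar_prod_def lessThan_atLeast0)
  finally show "(householder n u *\<^sub>v x) $ i = (x - (2 * (u \<bullet> x) / (u \<bullet> u)) \<cdot>\<^sub>v u) $ i"
    using i u x by simp
qed (use u x in \<open>auto simp: householder_def\<close>)

lemma householder_fixes_orthogonal:
  assumes u: "u \<in> carrier_vec n" and x: "x \<in> carrier_vec n" and ux: "u \<bullet> x = 0"
  shows "householder n u *\<^sub>v x = x"
  using householder_mult_vec[OF u x] ux u x by simp

lemma householder_involutive:
  assumes u: "u \<in> carrier_vec n" and x: "x \<in> carrier_vec n"
  shows "householder n u *\<^sub>v (householder n u *\<^sub>v x) = x"
proof (cases "u \<bullet> u = 0")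
  case True
  then show ?thesis using u x by (simp add: householder_mult_vec)
next
  case False
  define c where "c = 2 * (u \<bullet> x) / (u \<bullet> u)"
  have y: "x - c \<cdot>\<^sub>v u \<in> carrier_vec n" using u x by simp
  have "u \<bullet> (x - c \<cdot>\<^sub>v u) = u \<bullet> x - c * (u \<bullet> u)"
    using u x by (simp add: scalar_prod_minus_distrib)
  also have "\<dots> = - (u \<bullet> x)"
    using False by (simp add: c_def)
  finally have "2 * (u \<bullet> (x - c \<cdot>\<^sub>v u)) / (u \<bullet> u) = - c"
    by (simp add: c_def)
  then have "householder n u *\<^sub>v (x - c \<cdot>\<^sub>v u) = (x - c \<cdot>\<^sub>v u) - (- c) \<cdot>\<^sub>v u"
    using householder_mult_vec[OF u y] by simp
  also have "\<dots> = x"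
    using u x by (intro eq_vecI) auto
  finally show ?thesis
    using householder_mult_vec[OF u x] by (simp add: c_def)
qed

lemma mat_eq_by_unit_vecs:
  fixes X Y :: "'a::comm_ring_1 mat"
  assumes X: "X \<in> carrier_mat n n" and Y: "Y \<in> carrier_mat n n"
    and eq: "\<And>j. j < n \<Longrightarrow> X *\<^sub>v unit_vec n j = Y *\<^sub>v unit_vec n j"
  shows "X = Y"
proof (rule eq_matI)
  fix i j assume "i < dim_row Y" "j < dim_col Y"
  with Y have ij: "i < n" "j < n" by auto
  have "X $$ (i, j) = (X *\<^sub>v unit_vec n j) $ i" "Y $$ (i, j) = (Y *\<^sub>v unit_vec n j) $ i"
    using X Y ij by auto
  then show "X $$ (i, j) = Y $$ (i, j)" using eq[OF ij(2)] by simp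
qed (use X Y in auto)

lemma householder_orthogonal:
  assumes u: "u \<in> carrier_vec n"
  shows "orthogonal_matrix n (householder n u)"
proof -
  have "householder n u * householder n u = 1\<^sub>m n"
    using householder_involutive[OF u] mult_carrier_mat[OF householder_carrier householder_carrier]
    by (intro mat_eq_by_unit_vecs[of _ n]) (auto simp: assoc_mult_mat_vec[of _ n n _ n])
  then show ?thesis by (simp add: orthogonal_matrix_def transpose_householder)
qed

lemma householder_maps_unit_vec:
  assumes w: "w \<in> carrier_vec n" and k: "k < n" and ww: "w \<bullet> w = 1"
  shows "householder n (w - unit_vec n k) *\<^sub>v unit_vec n k = w"
proof -
  define u where "u = w - unit_vec n k"
  have u: "u \<in> carrier_vec n" using w by (simp add: u_def)
  have ue: "u \<bullet> unit_vec n k = w $ k - 1"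
    using k w by (simp add: u_def minus_scalar_prod_distrib)
  have "u \<bullet> u = u \<bullet> w - u \<bullet> unit_vec n k"
    unfolding u_def by (rule scalar_prod_minus_distrib) (use w in auto)
  also have "u \<bullet> w = w \<bullet> w - unit_vec n k \<bullet> w"
    unfolding u_def by (rule minus_scalar_prod_distrib) (use w in auto)
  finally have uu: "u \<bullet> u = 2 - 2 * w $ k"
    using ue ww w k by simp
  show ?thesis
  proof (cases "w $ k = 1")
    case True
    then have "u \<bullet> u = 0" using uu by simp
    then have "u = 0\<^sub>v n"
      using u conjugate_square_eq_0_vec[OF u] by simp
    then have "w = unit_vec n k"
      using w unfolding u_def by (metis carrier_vecD eq_vecI index_minus_vec(1) index_zero_vec(1)
          right_minus_eq unit_vec_carrier)
    then show ?thesis using True u k by (simp add: householder_mult_vec u_def)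
  next
    case False
    then have "2 * (u \<bullet> unit_vec n k) / (u \<bullet> u) = -1"
      unfolding ue uu by (simp add: field_simps)
    then have "householder n u *\<^sub>v unit_vec n k = unit_vec n k - (-1) \<cdot>\<^sub>v u"
      using householder_mult_vec[OF u, of "unit_vec n k"] by simp
    also have "\<dots> = w"
      unfolding u_def by (intro eq_vecI) (use w in auto)
    finally show ?thesis unfolding u_def .
  qed
qed

lemma householder_maps_to_unit_vec:
  assumes w: "w \<in> carrier_vec n" and k: "k < n" and ww: "w \<bullet> w = 1"
  shows "householder n (w - unit_vec n k) *\<^sub>v w = unit_vec n k"
  using householder_involutive[of "w - unit_vec n k" n "unit_vec n k"] householder_maps_unit_vec[OF assms] w
  by simp

lemma householder_fixes_unit_vec:
  assumes w: "w \<in> carrier_vec n" and j: "j < n" "j \<noteq> k" and wj: "w $ j = 0"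
  shows "householder n (w - unit_vec n k) *\<^sub>v unit_vec n j = unit_vec n j"
proof -
  have "(w - unit_vec n k) \<bullet> unit_vec n j = 0"
    using w j wj by (simp add: minus_scalar_prod_distrib) (simp add: unit_vec_def)
  then show ?thesis
    using householder_fixes_orthogonal[of "w - unit_vec n k" n] w j by simp
qed

definition diagonal_upto :: "nat \<Rightarrow> 'a::zero mat \<Rightarrow> bool" where
  "diagonal_upto k A \<longleftrightarrow>
     (\<forall>i<dim_row A. \<forall>j<dim_col A. i \<noteq> j \<and> (i < k \<or> j < k) \<longrightarrow> A $$ (i, j) = 0)"

lemma unit_vec_eigenvector_iff:
  fixes D :: "'a::comm_ring_1 mat"
  assumes D: "D \<in> carrier_mat n n" and j: "j < n"
  shows "(\<exists>\<mu>. D *\<^sub>v unit_vec n j = \<mu> \<cdot>\<^sub>v unit_vec n j) \<longleftrightarrow> (\<forall>i<n. i \<noteq> j \<longrightarrow> D $$ (i, j) = 0)"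
proof
  assume "\<exists>\<mu>. D *\<^sub>v unit_vec n j = \<mu> \<cdot>\<^sub>v unit_vec n j"
  then obtain \<mu> where "D *\<^sub>v unit_vec n j = \<mu> \<cdot>\<^sub>v unit_vec n j" ..
  moreover have "D $$ (i, j) = (D *\<^sub>v unit_vec n j) $ i" if "i < n" for i
    using D j that by simp
  ultimately show "\<forall>i<n. i \<noteq> j \<longrightarrow> D $$ (i, j) = 0"
    using j by simp
next
  assume "\<forall>i<n. i \<noteq> j \<longrightarrow> D $$ (i, j) = 0"
  then have "D *\<^sub>v unit_vec n j = D $$ (j, j) \<cdot>\<^sub>v unit_vec n j"
    using D j by (intro eq_vecI) auto
  then show "\<exists>\<mu>. D *\<^sub>v unit_vec n j = \<mu> \<cdot>\<^sub>v unit_vec n j" ..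
qed

lemma diagonal_upto_SucI:
  fixes D :: "'a::comm_ring_1 mat"
  assumes D: "D \<in> carrier_mat n n" and sym: "D\<^sup>T = D"
    and ev: "\<And>j. j \<le> k \<Longrightarrow> j < n \<Longrightarrow> \<exists>\<mu>. D *\<^sub>v unit_vec n j = \<mu> \<cdot>\<^sub>v unit_vec n j"
  shows "diagonal_upto (Suc k) D"
proof -
  have col: "D $$ (i, j) = 0" if "i < n" "j < n" "i \<noteq> j" "j \<le> k" for i j
    using ev[of j] unit_vec_eigenvector_iff[OF D] that by blast
  have "D $$ (i, j) = D $$ (j, i)" if "i < n" "j < n" for i j
    using sym D that by (metis carrier_matD index_transpose_mat(1))
  with col D show ?thesis
    unfolding diagonal_upto_def by (metis carrier_matD less_Suc_eq_le)
qed

lemma trailing_eigenvector: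
  fixes B :: "real mat"
  assumes B: "B \<in> carrier_mat n n" and sym: "B\<^sup>T = B" and diag: "diagonal_upto k B" and k: "k < n"
  shows "\<exists>e w. w \<in> carrier_vec n \<and> w \<bullet> w = 1 \<and> (\<forall>j<k. w $ j = 0) \<and> B *\<^sub>v w = e \<cdot>\<^sub>v w"
proof -
  define m where "m = n - k"
  obtain B1 B2 B3 B4 where split: "split_block B k k = (B1, B2, B3, B4)"
    by (cases "split_block B k k")
  have dims: "dim_row B = k + m" "dim_col B = k + m"
    using B k by (auto simp: m_def)
  note blocks = split_block[OF split dims]
  have B2: "B2 = 0\<^sub>m k m" and B3: "B3 = 0\<^sub>m m k"
    using split diag dims unfolding split_block_def diagonal_upto_def Let_def by auto
  have B4: "B4 = mat m m (\<lambda>(i, j). B $$ (i + k, j + k))"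
    using split dims unfolding split_block_def Let_def by auto
  have Bsym: "B $$ (i, j) = B $$ (j, i)" if "i < n" "j < n" for i j
    using sym B that by (metis carrier_matD index_transpose_mat(1))
  have "B4\<^sup>T = B4"
    unfolding B4 by (intro eq_matI) (auto simp: m_def intro: Bsym)
  then obtain e v where v: "v \<in> carrier_vec m" "B4 *\<^sub>v v = e \<cdot>\<^sub>v v" and vv: "v \<bullet> v = 1"
    using real_symmetric_has_unit_eigenvector[OF blocks(4)] k by (auto simp: m_def)
  define w where "w = 0\<^sub>v k @\<^sub>v v"
  have "w \<in> carrier_vec (k + m)"
    using v by (simp add: w_def)
  then have w: "w \<in> carrier_vec n"
    using k by (simp add: m_def)
  have "w \<bullet> w = 1"
    using v vv by (simp add: w_def scalar_prod_append[of _ k _ m])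
  moreover have "\<forall>j<k. w $ j = 0"
    using v by (simp add: w_def)
  moreover have "B *\<^sub>v w = e \<cdot>\<^sub>v w"
  proof -
    have "B *\<^sub>v w = (B1 *\<^sub>v 0\<^sub>v k + B2 *\<^sub>v v) @\<^sub>v (B3 *\<^sub>v 0\<^sub>v k + B4 *\<^sub>v v)"
      unfolding w_def by (subst blocks(5)) (rule four_block_mat_mult_vec[OF blocks(1-4)], use v in auto)
    also have "\<dots> = e \<cdot>\<^sub>v w"
      using blocks v unfolding B2 B3 w_def v(2) by (intro eq_vecI) (auto simp: m_def)
    finally show ?thesis .
  qed
  ultimately show ?thesis using w by blast
qed

lemma householder_deflation:
  fixes B :: "real mat"
  assumes B: "B \<in> carrier_mat n n" and sym: "B\<^sup>T = B" and diag: "diagonal_upto k B" and k: "k < n"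
  shows "\<exists>H. orthogonal_matrix n H \<and> diagonal_upto (Suc k) (H\<^sup>T * B * H)"
proof -
  obtain e w where w: "w \<in> carrier_vec n" "w \<bullet> w = 1" "\<forall>j<k. w $ j = 0" and Bw: "B *\<^sub>v w = e \<cdot>\<^sub>v w"
    using trailing_eigenvector[OF B sym diag k] by blast
  define H where "H = householder n (w - unit_vec n k)"
  have H: "H \<in> carrier_mat n n" "H\<^sup>T = H"
    by (simp_all add: H_def transpose_householder)
  have Hk: "H *\<^sub>v unit_vec n k = w" and Hw: "H *\<^sub>v w = unit_vec n k"
    unfolding H_def using householder_maps_unit_vec householder_maps_to_unit_vec w k by blast+
  have Hj: "H *\<^sub>v unit_vec n j = unit_vec n j" if "j < k" for j
    unfolding H_def using householder_fixes_unit_vec[OF w(1)] that k w(3) by simp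
  have conj: "(H\<^sup>T * B * H) *\<^sub>v x = H *\<^sub>v (B *\<^sub>v (H *\<^sub>v x))" if "x \<in> carrier_vec n" for x
    using B H that by (simp add: assoc_mult_mat_vec[of _ n n _ n])
  have "\<exists>\<mu>. (H\<^sup>T * B * H) *\<^sub>v unit_vec n j = \<mu> \<cdot>\<^sub>v unit_vec n j" if j: "j \<le> k" for j
  proof (cases "j < k")
    case True
    then obtain \<mu> where Bj: "B *\<^sub>v unit_vec n j = \<mu> \<cdot>\<^sub>v unit_vec n j"
      using diag B k unit_vec_eigenvector_iff[OF B, of j] by (force simp: diagonal_upto_def)
    have "(H\<^sup>T * B * H) *\<^sub>v unit_vec n j = H *\<^sub>v (\<mu> \<cdot>\<^sub>v unit_vec n j)"
      unfolding conj[OF unit_vec_carrier] Hj[OF True] Bj ..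
    also have "\<dots> = \<mu> \<cdot>\<^sub>v unit_vec n j"
      using H(1) True by (simp add: mult_mat_vec Hj)
    finally show ?thesis ..
  next
    case False
    with j have "j = k" by simp
    have "(H\<^sup>T * B * H) *\<^sub>v unit_vec n j = H *\<^sub>v (e \<cdot>\<^sub>v w)"
      unfolding conj[OF unit_vec_carrier] \<open>j = k\<close> Hk Bw ..
    also have "\<dots> = e \<cdot>\<^sub>v unit_vec n j"
      using H(1) w(1) \<open>j = k\<close> by (simp add: mult_mat_vec Hw)
    finally show ?thesis ..
  qed
  moreover have "H\<^sup>T * B * H \<in> carrier_mat n n" "(H\<^sup>T * B * H)\<^sup>T = H\<^sup>T * B * H"
    using transpose_conj_symmetric[OF B sym H(1)] B H by simp_all
  ultimately have "diagonal_upto (Suc k) (H\<^sup>T * B * H)"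
    by (intro diagonal_upto_SucI[of _ n]) auto
  then show ?thesis
    using householder_orthogonal[of "w - unit_vec n k" n] w by (auto simp: H_def)
qed

theorem orthogonal_diagonalization:
  fixes A :: "real mat"
  assumes A: "A \<in> carrier_mat n n" and sym: "A\<^sup>T = A"
  shows "\<exists>P. orthogonal_matrix n P \<and> diagonal_mat (P\<^sup>T * A * P)"
proof -
  have "\<exists>P. orthogonal_matrix n P \<and> diagonal_upto k (P\<^sup>T * A * P)" if "k \<le> n" for k
    using that
  proof (induction k)
    case 0
    have "orthogonal_matrix n (1\<^sub>m n)" by (simp add: orthogonal_matrix_def)
    then show ?case by (auto simp: diagonal_upto_def)
  next
    case (Suc k)
    then obtain P where P: "orthogonal_matrix n P" and diag: "diagonal_upto k (P\<^sup>T * A * P)"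
      by auto
    have Pc: "P \<in> carrier_mat n n" using P by (simp add: orthogonal_matrix_def)
    obtain H where H: "orthogonal_matrix n H" and diag': "diagonal_upto (Suc k) (H\<^sup>T * (P\<^sup>T * A * P) * H)"
      using householder_deflation[OF _ transpose_conj_symmetric[OF A sym Pc] diag] A Pc Suc.prems
      by fastforce
    have Hc: "H \<in> carrier_mat n n" using H by (simp add: orthogonal_matrix_def)
    have "(P * H)\<^sup>T * A * (P * H) = H\<^sup>T * (P\<^sup>T * A * P) * H"
      using A Pc Hc by (simp add: transpose_mult[of P n n H n] assoc_mult_mat[of _ n n _ n _ n])
    then show ?case
      using orthogonal_matrix_mult[OF P H] diag' by metis
  qed
  from this[of n] obtain P where "orthogonal_matrix n P" "diagonal_upto n (P\<^sup>T * A * P)"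
    by auto
  then show ?thesis
    using A by (auto simp: diagonal_upto_def diagonal_mat_def orthogonal_matrix_def)
qed

section \<open>Trace norm of symmetric matrices\<close>

lemma proots_prod_linear: "proots (\<Prod>a\<leftarrow>as. [:- a, 1:]) = mset (as :: real list)"
proof (induction as)
  case (Cons a as)
  have "proots ([:- a, 1:] * (\<Prod>a\<leftarrow>as. [:- a, 1:])) = proots [:- a, 1:] + proots (\<Prod>a\<leftarrow>as. [:- a, 1:])"
    by (rule proots_mult) (auto simp: prod_list_zero_iff)
  then show ?case using Cons by simp
qed simp

lemma similar_gram_conj_square:
  fixes A :: "real mat"
  assumes A: "A \<in> carrier_mat n n" and sym: "A\<^sup>T = A" and P: "orthogonal_matrix n P"
  shows "similar_mat (A\<^sup>T * A) ((P\<^sup>T * A * P) * (P\<^sup>T * A * P))"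
proof -
  define D where "D = P\<^sup>T * A * P"
  have Pc: "P \<in> carrier_mat n n" "P\<^sup>T * P = 1\<^sub>m n" and PP: "P * P\<^sup>T = 1\<^sub>m n"
    using P orthogonal_matrix_right_inverse[OF P] by (auto simp: orthogonal_matrix_def)
  have D: "D \<in> carrier_mat n n" using Pc A by (simp add: D_def)
  have "P * D * P\<^sup>T = (P * P\<^sup>T) * A * (P * P\<^sup>T)"
    unfolding D_def using Pc A by (simp add: assoc_mult_mat[of _ n n _ n _ n])
  then have AD: "A = P * D * P\<^sup>T"
    using A unfolding PP by simp
  have "A\<^sup>T * A = P * D * (P\<^sup>T * P) * D * P\<^sup>T"
    unfolding sym using Pc(1) D by (subst (1 2) AD) (simp add: assoc_mult_mat[of _ n n _ n _ n])
  also have "\<dots> = P * (D * D) * P\<^sup>T"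
    unfolding Pc(2) using Pc D by (simp add: assoc_mult_mat[of _ n n _ n _ n])
  finally have "similar_mat_wit (A\<^sup>T * A) (D * D) P P\<^sup>T"
    using A Pc PP D by (intro similar_mat_witI[of _ _ n]) (auto simp: assoc_mult_mat[of _ n n _ n _ n])
  then show ?thesis
    unfolding similar_mat_def D_def by blast
qed

lemma diagonal_mat_square_index:
  fixes D :: "'a::comm_ring_1 mat"
  assumes D: "D \<in> carrier_mat n n" and diag: "diagonal_mat D" and ij: "i < n" "j < n"
  shows "(D * D) $$ (i, j) = (if i = j then (D $$ (i, i))\<^sup>2 else 0)"
proof -
  have Dz: "D $$ (i, j) = 0" if "i < n" "j < n" "i \<noteq> j" for i j
    using diag D that unfolding diagonal_mat_def by auto
  have "(D * D) $$ (i, j) = (\<Sum>l\<in>{0..<n}. D $$ (i, l) * D $$ (l, j))"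
    using D ij by (simp add: scalar_prod_def)
  also have "\<dots> = (\<Sum>l\<in>{0..<n}. if l = i then D $$ (i, i) * D $$ (i, j) else 0)"
    by (intro sum.cong refl) (use Dz ij in auto)
  finally show ?thesis
    using Dz ij by (auto simp: power2_eq_square)
qed

lemma trace_norm_symmetric:
  fixes A :: "real mat"
  assumes A: "A \<in> carrier_mat n n" and sym: "A\<^sup>T = A"
    and P: "orthogonal_matrix n P" and diag: "diagonal_mat (P\<^sup>T * A * P)"
  shows "trace_norm A = (\<Sum>i<n. \<bar>(P\<^sup>T * A * P) $$ (i, i)\<bar>)"
proof -
  define D where "D = P\<^sup>T * A * P"
  have "P \<in> carrier_mat n n" using P by (simp add: orthogonal_matrix_def)
  then have "D \<in> carrier_mat n n" using A by (simp add: D_def)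
  then have D: "D \<in> carrier_mat n n" "D * D \<in> carrier_mat n n" by simp_all
  note DD = diagonal_mat_square_index[OF D(1) diag[folded D_def]]
  have "upper_triangular (D * D)"
    using D DD by (auto simp: upper_triangular_def)
  then have "proots (char_poly (A\<^sup>T * A)) = mset (diag_mat (D * D))"
    using char_poly_similar[OF similar_gram_conj_square[OF A sym P, folded D_def]]
      char_poly_upper_triangular[OF D(2)]
    by (simp add: proots_prod_linear)
  then have "trace_norm A = sum_list (map sqrt (diag_mat (D * D)))"
    unfolding trace_norm_def by (metis mset_map sum_mset_sum_list)
  also have "\<dots> = (\<Sum>i\<in>{0..<n}. sqrt ((D * D) $$ (i, i)))"
    unfolding diag_mat_def using D by (simp add: sum_set_upt_conv_sum_list_nat[symmetric] comp_def)
  also have "\<dots> = (\<Sum>i<n. \<bar>D $$ (i, i)\<bar>)"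
    unfolding lessThan_atLeast0 by (intro sum.cong refl) (simp add: DD)
  finally show ?thesis unfolding D_def .
qed

lemma trace_norm_symmetric_eq_sum:
  fixes A :: "real mat"
  assumes A: "A \<in> carrier_mat n n" and sym: "A\<^sup>T = A"
  shows "\<exists>P. orthogonal_matrix n P \<and> trace_norm A = (\<Sum>i<n. \<bar>col P i \<bullet> (A *\<^sub>v col P i)\<bar>)"
proof -
  obtain P where P: "orthogonal_matrix n P" and diag: "diagonal_mat (P\<^sup>T * A * P)"
    using orthogonal_diagonalization[OF A sym] by blast
  then have "P \<in> carrier_mat n n" by (simp add: orthogonal_matrix_def)
  then show ?thesis
    using trace_norm_symmetric[OF A sym P diag] index_transpose_conj[OF A] P by auto
qed

section \<open>Quadratic forms of positive semidefinite matrices\<close>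

lemma mat_trace_mult_comm:
  assumes A: "A \<in> carrier_mat n m" and B: "B \<in> carrier_mat m n"
  shows "mat_trace (A * B) = mat_trace (B * A)"
proof -
  have "mat_trace (A * B) = (\<Sum>i<n. \<Sum>j<m. A $$ (i, j) * B $$ (j, i))"
    using A B by (simp add: mat_trace_def scalar_prod_def lessThan_atLeast0)
  also have "\<dots> = (\<Sum>j<m. \<Sum>i<n. B $$ (j, i) * A $$ (i, j))"
    by (subst sum.swap) (simp add: mult.commute)
  also have "\<dots> = mat_trace (B * A)"
    using A B by (simp add: mat_trace_def scalar_prod_def lessThan_atLeast0)
  finally show ?thesis .
qed

lemma sum_quadratic_forms_orthogonal:
  assumes P: "orthogonal_matrix n P" and A: "A \<in> carrier_mat n n"
  shows "(\<Sum>i<n. col P i \<bullet> (A *\<^sub>v col P i)) = mat_trace A"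
proof -
  have Pc: "P \<in> carrier_mat n n" using P by (simp add: orthogonal_matrix_def)
  have "(\<Sum>i<n. col P i \<bullet> (A *\<^sub>v col P i)) = mat_trace (P\<^sup>T * (A * P))"
    using A Pc by (simp add: mat_trace_def index_transpose_conj assoc_mult_mat[of _ n n _ n _ n]
        mult_mat_vec_def)
  also have "\<dots> = mat_trace (A * P * P\<^sup>T)"
    by (rule mat_trace_mult_comm) (use A Pc in auto)
  also have "\<dots> = mat_trace A"
    using A Pc orthogonal_matrix_right_inverse[OF P] by (simp add: assoc_mult_mat[of _ n n _ n _ n])
  finally show ?thesis .
qed

lemma psd_bilinear_le:
  assumes R: "psd_mat n R" and x: "x \<in> carrier_vec n" and y: "y \<in> carrier_vec n" and t: "0 < t"
  shows "\<bar>x \<bullet> (R *\<^sub>v y)\<bar> \<le> (t * (x \<bullet> (R *\<^sub>v x)) + (y \<bullet> (R *\<^sub>v y)) / t) / 2"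
proof -
  have Rc: "R \<in> carrier_mat n n" and sym: "R\<^sup>T = R" and nonneg: "\<And>z. z \<in> carrier_vec n \<Longrightarrow> 0 \<le> z \<bullet> (R *\<^sub>v z)"
    using R by (auto simp: psd_mat_def)
  have yx: "y \<bullet> (R *\<^sub>v x) = x \<bullet> (R *\<^sub>v y)"
    using transpose_vec_mult_scalar[OF Rc x y] sym comm_scalar_prod[of x n "R *\<^sub>v y"] Rc x y
    by simp
  have expand: "(s \<cdot>\<^sub>v x + y) \<bullet> (R *\<^sub>v (s \<cdot>\<^sub>v x + y))
      = s\<^sup>2 * (x \<bullet> (R *\<^sub>v x)) + 2 * s * (x \<bullet> (R *\<^sub>v y)) + y \<bullet> (R *\<^sub>v y)" for s
    using Rc x y yx
    by (simp add: mult_add_distrib_mat_vec[of _ n n] mult_mat_vec add_scalar_prod_distrib[of _ n]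
        scalar_prod_add_distrib[of _ n] power2_eq_square algebra_simps)
  have "0 \<le> t\<^sup>2 * (x \<bullet> (R *\<^sub>v x)) + 2 * t * (x \<bullet> (R *\<^sub>v y)) + y \<bullet> (R *\<^sub>v y)"
    and "0 \<le> t\<^sup>2 * (x \<bullet> (R *\<^sub>v x)) - 2 * t * (x \<bullet> (R *\<^sub>v y)) + y \<bullet> (R *\<^sub>v y)"
    using nonneg[of "t \<cdot>\<^sub>v x + y"] nonneg[of "(- t) \<cdot>\<^sub>v x + y"] expand[of t] expand[of "- t"] x y
    by auto
  then have "2 * t * \<bar>x \<bullet> (R *\<^sub>v y)\<bar> \<le> t\<^sup>2 * (x \<bullet> (R *\<^sub>v x)) + y \<bullet> (R *\<^sub>v y)"
    by (cases "0 \<le> x \<bullet> (R *\<^sub>v y)") auto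
  then show ?thesis
    using t by (simp add: field_simps power2_eq_square)
qed

lemma transpose_mat_diag [simp]: "(mat_diag n a)\<^sup>T = mat_diag n a"
  unfolding mat_diag_def by (rule eq_matI) auto

lemma dim_mat_diag [simp]: "dim_row (mat_diag n a) = n" "dim_col (mat_diag n a) = n"
  by (simp_all add: mat_diag_def)

lemma mat_diag_mult_carrier [simp]: "R \<in> carrier_mat n m \<Longrightarrow> mat_diag n a * R \<in> carrier_mat n m"
  by (intro carrier_matI) auto

lemma mult_mat_diag_carrier [simp]: "R \<in> carrier_mat n m \<Longrightarrow> R * mat_diag m a \<in> carrier_mat n m"
  by (intro carrier_matI) auto

lemma index_mat_diag_conj:
  assumes "R \<in> carrier_mat n n" "k < n" "l < n"
  shows "(mat_diag n a * R * mat_diag n b) $$ (k, l) = a k * R $$ (k, l) * b l"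
  using assms by (simp add: mat_diag_mult_left[of _ n n] mat_diag_mult_right[of _ n n])

lemma mat_trace_diag_conj:
  assumes R: "R \<in> carrier_mat n n"
  shows "mat_trace (mat_diag n a * R * mat_diag n b) = (\<Sum>k<n. a k * b k * R $$ (k, k))"
  unfolding mat_trace_def
proof (intro sum.cong)
  fix k assume "k \<in> {..<n}"
  then have "(mat_diag n a * R * mat_diag n b) $$ (k, k) = a k * R $$ (k, k) * b k"
    using R by (intro index_mat_diag_conj) auto
  then show "(mat_diag n a * R * mat_diag n b) $$ (k, k) = a k * b k * R $$ (k, k)"
    by (simp only: mult_ac)
qed simp

lemma scalar_prod_mat_diag_swap:
  fixes p z :: "'a::comm_ring_1 vec"
  assumes p: "p \<in> carrier_vec n" and z: "z \<in> carrier_vec n"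
  shows "p \<bullet> (mat_diag n c *\<^sub>v z) = (mat_diag n c *\<^sub>v p) \<bullet> z"
proof -
  have "(mat_diag n c *\<^sub>v z) \<bullet> p = z \<bullet> (mat_diag n c *\<^sub>v p)"
    using transpose_vec_mult_scalar[of "mat_diag n c" n n p z] p z by simp
  moreover have "p \<bullet> (mat_diag n c *\<^sub>v z) = (mat_diag n c *\<^sub>v z) \<bullet> p"
    "z \<bullet> (mat_diag n c *\<^sub>v p) = (mat_diag n c *\<^sub>v p) \<bullet> z"
    using p z mult_mat_vec_carrier[OF mat_diag_dim p] mult_mat_vec_carrier[OF mat_diag_dim z]
    by (simp_all add: comm_scalar_prod[of _ n])
  ultimately show ?thesis by simp
qed

lemma sum_abs_diag_bilinear_le:
  assumes R: "psd_mat n R" and P: "orthogonal_matrix n P" and t: "0 < t"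
  shows "(\<Sum>i<n. \<bar>col P i \<bullet> ((mat_diag n a * R * mat_diag n b) *\<^sub>v col P i)\<bar>)
    \<le> (t * (\<Sum>k<n. (a k)\<^sup>2 * R $$ (k, k)) + (\<Sum>k<n. (b k)\<^sup>2 * R $$ (k, k)) / t) / 2"
proof -
  have Rc: "R \<in> carrier_mat n n" using R by (simp add: psd_mat_def)
  have Pc: "P \<in> carrier_mat n n" using P by (simp add: orthogonal_matrix_def)
  define Q where "Q c p = (mat_diag n c *\<^sub>v p) \<bullet> (R *\<^sub>v (mat_diag n c *\<^sub>v p))" for c p
  have form: "p \<bullet> ((mat_diag n c * R * mat_diag n d) *\<^sub>v p) = (mat_diag n c *\<^sub>v p) \<bullet> (R *\<^sub>v (mat_diag n d *\<^sub>v p))"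
    if "p \<in> carrier_vec n" for c d p
  proof -
    have "(mat_diag n c * R * mat_diag n d) *\<^sub>v p = mat_diag n c *\<^sub>v (R *\<^sub>v (mat_diag n d *\<^sub>v p))"
      using Rc that mult_mat_vec_carrier[OF mat_diag_dim that]
      by (simp add: assoc_mult_mat_vec[of "mat_diag n c * R" n n _ n]
          assoc_mult_mat_vec[of "mat_diag n c" n n R n])
    then show ?thesis
      using scalar_prod_mat_diag_swap[OF that mult_mat_vec_carrier[OF Rc mult_mat_vec_carrier[OF mat_diag_dim that]]]
      by simp
  qed
  have sumQ: "(\<Sum>i<n. Q c (col P i)) = (\<Sum>k<n. (c k)\<^sup>2 * R $$ (k, k))" for c
    using sum_quadratic_forms_orthogonal[OF P mult_mat_diag_carrier[OF mat_diag_mult_carrier[OF Rc]]] Rc Pc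
    by (simp add: Q_def form mat_trace_diag_conj power2_eq_square)
  have "(\<Sum>i<n. \<bar>col P i \<bullet> ((mat_diag n a * R * mat_diag n b) *\<^sub>v col P i)\<bar>)
      \<le> (\<Sum>i<n. (t * Q a (col P i) + Q b (col P i) / t) / 2)"
  proof (intro sum_mono)
    fix i assume "i \<in> {..<n}"
    then have p: "col P i \<in> carrier_vec n" using Pc by simp
    show "\<bar>col P i \<bullet> ((mat_diag n a * R * mat_diag n b) *\<^sub>v col P i)\<bar>
        \<le> (t * Q a (col P i) + Q b (col P i) / t) / 2"
      unfolding form[OF p] Q_def
      by (rule psd_bilinear_le[OF R mult_mat_vec_carrier[OF mat_diag_dim p] mult_mat_vec_carrier[OF mat_diag_dim p] t])
  qed
  also have "\<dots> = (t * (\<Sum>i<n. Q a (col P i)) + (\<Sum>i<n. Q b (col P i)) / t) / 2"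
    by (simp add: sum_divide_distrib sum_distrib_left sum.distrib add_divide_distrib)
  finally show ?thesis unfolding sumQ .
qed

section \<open>Distance to the diagonally normalized matrix\<close>

lemma sqrt_diff_square_le:
  assumes "0 \<le> a" "0 \<le> b"
  shows "(sqrt a - sqrt b)\<^sup>2 \<le> \<bar>a - b\<bar>"
proof -
  have "a - b = (sqrt a - sqrt b) * (sqrt a + sqrt b)"
    using assms by (simp add: algebra_simps)
  then have "\<bar>a - b\<bar> = \<bar>sqrt a - sqrt b\<bar> * (sqrt a + sqrt b)"
    using assms by (simp add: abs_mult)
  moreover have "\<bar>sqrt a - sqrt b\<bar> \<le> sqrt a + sqrt b"
    using real_sqrt_ge_zero[OF assms(1)] real_sqrt_ge_zero[OF assms(2)] by linarith
  ultimately show ?thesis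
    by (metis abs_ge_zero mult_left_mono power2_abs power2_eq_square)
qed

lemma le_two_sqrt_if_le_add_inverse:
  fixes a b :: real
  assumes le: "\<And>t. 0 < t \<Longrightarrow> a \<le> t * b + 1 / t" and b: "0 \<le> b"
  shows "a \<le> 2 * sqrt b"
proof (cases "b = 0")
  case True
  show ?thesis
  proof (rule ccontr)
    assume "\<not> a \<le> 2 * sqrt b"
    then have "0 < a" using True by simp
    then show False using le[of "2 / a"] True by simp
  qed
next
  case False
  with b have "0 < sqrt b" by simp
  then show ?thesis
    using le[of "1 / sqrt b"] b by (simp add: real_div_sqrt)
qed

lemma trace_norm_diag_perturbation_le:
  fixes R A :: "real mat"
  assumes R: "psd_mat n R" and A: "A = mat_diag n e * R + mat_diag n c * R * mat_diag n e"
    and sym: "A\<^sup>T = A" and t: "0 < t"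
  shows "trace_norm A \<le> t * (\<Sum>k<n. (e k)\<^sup>2 * R $$ (k, k))
    + ((\<Sum>k<n. R $$ (k, k)) + (\<Sum>k<n. (c k)\<^sup>2 * R $$ (k, k))) / (2 * t)"
proof -
  define A1 where "A1 = mat_diag n e * R"
  define A2 where "A2 = mat_diag n c * R * mat_diag n e"
  have Rc: "R \<in> carrier_mat n n" using R by (simp add: psd_mat_def)
  then have A12: "A1 \<in> carrier_mat n n" "A2 \<in> carrier_mat n n"
    by (simp_all add: A1_def A2_def)
  then have "A \<in> carrier_mat n n" unfolding A A1_def[symmetric] A2_def[symmetric] by simp
  then obtain P where P: "orthogonal_matrix n P"
    and tn: "trace_norm A = (\<Sum>i<n. \<bar>col P i \<bullet> (A *\<^sub>v col P i)\<bar>)"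
    using trace_norm_symmetric_eq_sum sym by blast
  have "col P i \<bullet> (A *\<^sub>v col P i) = col P i \<bullet> (A1 *\<^sub>v col P i) + col P i \<bullet> (A2 *\<^sub>v col P i)"
    if "i < n" for i
    using A12 P that unfolding A A1_def[symmetric] A2_def[symmetric]
    by (simp add: add_mult_distrib_mat_vec[of _ n n] scalar_prod_add_distrib[of _ n] orthogonal_matrix_def)
  then have "trace_norm A \<le> (\<Sum>i<n. \<bar>col P i \<bullet> (A1 *\<^sub>v col P i)\<bar>) + (\<Sum>i<n. \<bar>col P i \<bullet> (A2 *\<^sub>v col P i)\<bar>)"
    unfolding tn by (simp flip: sum.distrib) (intro sum_mono abs_triangle_ineq)
  also have "\<dots> \<le> (t * (\<Sum>k<n. (e k)\<^sup>2 * R $$ (k, k)) + (\<Sum>k<n. R $$ (k, k)) / t) / 2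
      + ((\<Sum>k<n. (c k)\<^sup>2 * R $$ (k, k)) / t + t * (\<Sum>k<n. (e k)\<^sup>2 * R $$ (k, k))) / 2"
    using sum_abs_diag_bilinear_le[OF R P t, of e "\<lambda>_. 1"] sum_abs_diag_bilinear_le[OF R P, of "1 / t" c e] t
    unfolding A1_def A2_def by (simp add: right_mult_one_mat[OF mat_diag_mult_carrier[OF Rc]] mult.commute[of t]) argo
  also have "\<dots> = t * (\<Sum>k<n. (e k)\<^sup>2 * R $$ (k, k))
      + ((\<Sum>k<n. R $$ (k, k)) + (\<Sum>k<n. (c k)\<^sup>2 * R $$ (k, k))) / (2 * t)"
    using t by (simp add: field_simps)
  finally show ?thesis .
qed

lemma diagonal_normalization_eq:
  fixes \<rho> :: "real mat"
  assumes R: "\<rho> \<in> carrier_mat n n" and pos: "\<forall>i<n. 0 < \<rho> $$ (i, i)"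
  defines "c \<equiv> \<lambda>k. 1 / sqrt (real n * \<rho> $$ (k, k))"
  shows "\<rho> - mat n n (\<lambda>(i, j). \<rho> $$ (i, j) / (real n * sqrt (\<rho> $$ (i, i) * \<rho> $$ (j, j))))
    = mat_diag n (\<lambda>k. 1 - c k) * \<rho> + mat_diag n c * \<rho> * mat_diag n (\<lambda>k. 1 - c k)"
proof (rule eq_matI)
  fix k l assume "k < dim_row (mat_diag n (\<lambda>k. 1 - c k) * \<rho> + mat_diag n c * \<rho> * mat_diag n (\<lambda>k. 1 - c k))"
    "l < dim_col (mat_diag n (\<lambda>k. 1 - c k) * \<rho> + mat_diag n c * \<rho> * mat_diag n (\<lambda>k. 1 - c k))"
  then have kl: "k < n" "l < n" using R by auto
  have "c k * c l = 1 / (real n * sqrt (\<rho> $$ (k, k) * \<rho> $$ (l, l)))"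
    using pos kl by (simp add: c_def real_sqrt_mult)
  then have "(\<rho> - mat n n (\<lambda>(i, j). \<rho> $$ (i, j) / (real n * sqrt (\<rho> $$ (i, i) * \<rho> $$ (j, j))))) $$ (k, l)
      = \<rho> $$ (k, l) - \<rho> $$ (k, l) * (c k * c l)"
    using R kl by simp
  also have "\<dots> = (1 - c k) * \<rho> $$ (k, l) + c k * \<rho> $$ (k, l) * (1 - c l)"
    by (simp add: algebra_simps)
  also have "\<dots> = (mat_diag n (\<lambda>k. 1 - c k) * \<rho> + mat_diag n c * \<rho> * mat_diag n (\<lambda>k. 1 - c k)) $$ (k, l)"
    using R kl index_mat_diag_conj[OF R kl] by (simp add: mat_diag_mult_left[OF R] del: index_mult_mat(1))
  finally show "(\<rho> - mat n n (\<lambda>(i, j). \<rho> $$ (i, j) / (real n * sqrt (\<rho> $$ (i, i) * \<rho> $$ (j, j))))) $$ (k, l)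
    = (mat_diag n (\<lambda>k. 1 - c k) * \<rho> + mat_diag n c * \<rho> * mat_diag n (\<lambda>k. 1 - c k)) $$ (k, l)" .
qed (use R in auto)

lemma one_minus_inv_sqrt_sq_le:
  assumes d: "0 < d" and m: "0 < m"
  shows "(1 - 1 / sqrt (m * d))\<^sup>2 * d \<le> \<bar>d - 1 / m\<bar>"
proof -
  have "(1 - 1 / sqrt (m * d)) * sqrt d = sqrt d - sqrt (1 / m)"
    using d m by (simp add: real_sqrt_mult real_sqrt_divide field_simps)
  then have "(1 - 1 / sqrt (m * d))\<^sup>2 * d = (sqrt d - sqrt (1 / m))\<^sup>2"
    using d by (metis power_mult_distrib real_sqrt_pow2 less_imp_le)
  also have "\<dots> \<le> \<bar>d - 1 / m\<bar>"
    using d m by (intro sqrt_diff_square_le) auto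
  finally show ?thesis .
qed

lemma trace_norm_diagonal_normalization_le:
  fixes \<rho> :: "real mat"
  assumes psd: "psd_mat n \<rho>" and tr: "mat_trace \<rho> = 1" and pos: "\<forall>i<n. 0 < \<rho> $$ (i, i)"
  shows "trace_norm (\<rho> - mat n n (\<lambda>(i, j). \<rho> $$ (i, j) / (real n * sqrt (\<rho> $$ (i, i) * \<rho> $$ (j, j)))))
    \<le> 2 * sqrt (\<Sum>i<n. \<bar>\<rho> $$ (i, i) - 1 / real n\<bar>)"
    (is "trace_norm ?M \<le> _")
proof -
  have R: "\<rho> \<in> carrier_mat n n" and sym: "\<rho>\<^sup>T = \<rho>"
    using psd by (auto simp: psd_mat_def)
  have tr': "(\<Sum>k<n. \<rho> $$ (k, k)) = 1"
    using tr R by (simp add: mat_trace_def)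
  then have n: "0 < n" by (cases n) auto
  define c where "c k = 1 / sqrt (real n * \<rho> $$ (k, k))" for k
  define X where "X = (\<Sum>k<n. (1 - c k)\<^sup>2 * \<rho> $$ (k, k))"
  have "\<rho> $$ (i, j) = \<rho> $$ (j, i)" if "i < n" "j < n" for i j
    using R sym that by (metis carrier_matD index_transpose_mat(1))
  then have "?M\<^sup>T = ?M"
    using R by (intro eq_matI) (auto simp: mult.commute)
  moreover have "(\<Sum>k<n. (c k)\<^sup>2 * \<rho> $$ (k, k)) = (\<Sum>k<n. 1 / real n)"
  proof (intro sum.cong refl)
    fix k assume "k \<in> {..<n}"
    with pos have "0 < \<rho> $$ (k, k)" by simp
    then show "(c k)\<^sup>2 * \<rho> $$ (k, k) = 1 / real n"
      by (simp add: c_def power_divide)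
  qed
  then have "(\<Sum>k<n. (c k)\<^sup>2 * \<rho> $$ (k, k)) = 1"
    using n by simp
  ultimately have "trace_norm ?M \<le> t * X + 1 / t" if "0 < t" for t
    using trace_norm_diag_perturbation_le[OF psd diagonal_normalization_eq[OF R pos] _ that] tr'
    by (simp add: X_def c_def)
  moreover have "0 \<le> X"
    unfolding X_def using pos by (intro sum_nonneg) (simp add: less_imp_le)
  ultimately have "trace_norm ?M \<le> 2 * sqrt X"
    by (rule le_two_sqrt_if_le_add_inverse)
  also have "X \<le> (\<Sum>k<n. \<bar>\<rho> $$ (k, k) - 1 / real n\<bar>)"
    unfolding X_def c_def using pos n by (intro sum_mono one_minus_inv_sqrt_sq_le) auto
  then have "2 * sqrt X \<le> 2 * sqrt (\<Sum>k<n. \<bar>\<rho> $$ (k, k) - 1 / real n\<bar>)"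
    by simp
  finally show ?thesis .
qed

theorem lemma6:
  shows "\<exists>K::real. \<forall>(n::nat) (\<xi>::real) (\<rho>::real mat).
    0 \<le> \<xi> \<and> \<xi> \<le> 1/2 \<and> psd_mat n \<rho> \<and> mat_trace \<rho> = 1 \<and>
    (\<forall>i<n. \<rho> $$ (i, i) > 0) \<and>
    (\<Sum>i<n. \<bar>\<rho> $$ (i, i) - 1 / real n\<bar>) \<le> \<xi> ^ 3
    \<longrightarrow> trace_norm (\<rho> - mat n n (\<lambda>(i, j). \<rho> $$ (i, j) / (real n * sqrt (\<rho> $$ (i, i) * \<rho> $$ (j, j)))))
        \<le> K * \<xi>"
proof (intro exI[of _ 2] allI impI, elim conjE)
  fix n :: nat and \<xi> :: real and \<rho> :: "real mat"
  assume \<xi>: "0 \<le> \<xi>" "\<xi> \<le> 1/2" and \<rho>: "psd_mat n \<rho>" "mat_trace \<rho> = 1" "\<forall>i<n. \<rho> $$ (i, i) > 0"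
    and dev: "(\<Sum>i<n. \<bar>\<rho> $$ (i, i) - 1 / real n\<bar>) \<le> \<xi> ^ 3"
  have "\<xi> ^ 3 \<le> \<xi>\<^sup>2"
    using \<xi> by (intro power_decreasing) auto
  with dev have "sqrt (\<Sum>i<n. \<bar>\<rho> $$ (i, i) - 1 / real n\<bar>) \<le> sqrt (\<xi>\<^sup>2)"
    by (intro real_sqrt_le_mono) simp
  also have "\<dots> = \<xi>" using \<xi> by simp
  finally have "2 * sqrt (\<Sum>i<n. \<bar>\<rho> $$ (i, i) - 1 / real n\<bar>) \<le> 2 * \<xi>"
    by simp
  with trace_norm_diagonal_normalization_le[OF \<rho>]
  show "trace_norm (\<rho> - mat n n (\<lambda>(i, j). \<rho> $$ (i, j) / (real n * sqrt (\<rho> $$ (i, i) * \<rho> $$ (j, j)))))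
      \<le> 2 * \<xi>"
    by (rule order_trans)
qed

end
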